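(* For $n\in\mathbb{N}$: (1) if $n\in\{1,2\}$ then $c(n)=\lceil\log_2 n\rceil+1$ and $h(n)=\lceil\log_2 n\rceil$; (2) if $n\ge3$ then $c(n)\le\lceil\log_2 n\rceil$ and $h(n)\le\lceil\log_2 n\rceil-1$, and equality holds for infinitely many $n\ge 3$.
   Context: For $i\in\mathbb{N}$, $m\in\mathbb{N}_0$ let $d_i(m)=2^{i-1}-|(m\bmod 2^i)-2^{i-1}|$, and let $c(n)$ be the number of distinct values in $\{d_i(n):i\in\mathbb{N}\}$. For $k\ge0$, $0\le m<2^k$ let $\beta_k(m)\in\{0,1\}^k$ have $j$-th coordinate equal to the binary digit of $m$ of weight $2^{k-j}$. For $n\ge2$, $k=\lceil\log_2 n\rceil$, a pair $(n_0,n_1)$ with $n=n_0+n_1$, $n_0\ge n_1\ge1$ is a hypercubic bipartition (HCBP) of $n$ if for some $i\in\{1,\dots,k\}$ the hyperplane $x_i=1/2$ splits $\beta_k(0),\dots,\beta_k(n-1)$ into $n_0$ points on one side and $n_1$ on the other. For $n\ge2$, $h(n)$ is the number of HCBPs of $n$; $h(1)=0$. *)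

theory Defs
  imports Complex_Main
begin

definition d :: "nat \<Rightarrow> nat \<Rightarrow> int" where
  "d i m = 2 ^ (i - 1) - \<bar>int (m mod 2 ^ i) - 2 ^ (i - 1)\<bar>"

definition c :: "nat \<Rightarrow> nat" where
  "c n = card {d i n | i. i \<ge> 1}"

definition clog2 :: "nat \<Rightarrow> nat" where
  "clog2 n = nat \<lceil>log 2 (real n)\<rceil>"

definition beta :: "nat \<Rightarrow> nat \<Rightarrow> nat \<Rightarrow> nat" where
  "beta k m j = (m div 2 ^ (k - j)) mod 2"

definition side_count :: "nat \<Rightarrow> nat \<Rightarrow> nat \<Rightarrow> nat \<Rightarrow> nat" where
  "side_count n k i b = card {m. m < n \<and> beta k m i = b}"

definition is_HCBP :: "nat \<Rightarrow> nat \<Rightarrow> nat \<Rightarrow> bool" where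
  "is_HCBP n n0 n1 \<longleftrightarrow> n \<ge> 2 \<and> n = n0 + n1 \<and> n0 \<ge> n1 \<and> n1 \<ge> 1 \<and>
     (\<exists>i \<in> {1..clog2 n}.
        (side_count n (clog2 n) i 0 = n0 \<and> side_count n (clog2 n) i 1 = n1) \<or>
        (side_count n (clog2 n) i 0 = n1 \<and> side_count n (clog2 n) i 1 = n0))"

definition h :: "nat \<Rightarrow> nat" where
  "h n = (if n \<ge> 2 then card {(n0, n1). is_HCBP n n0 n1} else 0)"

end

theory Submission
  imports Defs
begin

text \<open>
  Counting the points \<open>m < n\<close> on both sides of the hyperplane that tests the binary digit of
  weight \<open>2\<^sup>j\<close> gives sizes whose difference is \<open>d\<^sub>j\<^sub>+\<^sub>1(n)\<close>: adding the point \<open>n\<close> moves \<open>n mod 2\<^sup>j\<^sup>+\<^sup>1\<close>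
  one step along the tent function, up if that digit is \<open>0\<close> and down if it is \<open>1\<close>.
  Hence the hypercubic bipartitions of \<open>n\<close> correspond to the values \<open>d\<^sub>i(n) \<noteq> n\<close> with
  \<open>i \<le> k = \<lceil>log\<^sub>2 n\<rceil>\<close>, while \<open>d\<^sub>i(n) = n\<close> for \<open>i > k\<close>, so \<open>c(n) = h(n) + 1\<close> for \<open>n \<ge> 2\<close>.
  For \<open>n \<ge> 3\<close> two of \<open>d\<^sub>1(n), d\<^sub>2(n), d\<^sub>3(n)\<close> coincide, so at most \<open>k\<close> of the \<open>k + 1\<close> values
  \<open>d\<^sub>1(n), \<dots>, d\<^sub>k\<^sub>+\<^sub>1(n)\<close> are distinct. Equality holds for \<open>n = (4\<^sup>t - 1)/3 = (0101\<dots>01)\<^sub>2\<close>,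
  whose values \<open>d\<^sub>i(n)\<close>, \<open>2 \<le> i \<le> 2t\<close>, are the strictly increasing Jacobsthal numbers.
\<close>

lemma clog2_eqI:
  assumes "2 ^ j < n" "n \<le> 2 ^ Suc j"
  shows "clog2 n = Suc j"
proof -
  have "\<lceil>log (real 2) (real n)\<rceil> = int j + 1"
    by (rule ceiling_log_nat_eq_if) (use assms in auto)
  then show ?thesis unfolding clog2_def by simp
qed

lemma le_two_pow_clog2:
  assumes "n \<ge> 1"
  shows "n \<le> 2 ^ clog2 n"
proof -
  have "real n \<le> 2 ^ nat \<lceil>log 2 (real n)\<rceil>"
    by (rule power_of_nat_log_ge) simp
  then show ?thesis unfolding clog2_def by (simp flip: of_nat_le_iff)
qed

lemma clog2_1: "clog2 1 = 0"
  unfolding clog2_def by simp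

lemma clog2_2: "clog2 2 = 1"
  using clog2_eqI[of 0 2] by simp

lemma d_eq_self:
  assumes "n \<le> 2 ^ j"
  shows "d (Suc j) n = int n"
proof -
  have "n < 2 ^ Suc j" using assms by (simp add: le_less_trans)
  then have "n mod 2 ^ Suc j = n" by simp
  moreover have "int n \<le> 2 ^ j" using assms by (simp flip: of_nat_le_iff)
  ultimately show ?thesis unfolding d_def by simp
qed

lemma d_nonneg: "d (Suc j) n \<ge> 0"
proof -
  have "int (n mod 2 ^ Suc j) < 2 * 2 ^ j"
    using of_nat_less_iff[of "n mod 2 ^ Suc j" "2 * 2 ^ j", where 'a = int] by simp
  then show ?thesis unfolding d_def by simp
qed

lemma tent_step:
  fixes x P :: int
  assumes "0 \<le> x" "x < 2 * P"
  shows "P - \<bar>(if x + 1 = 2 * P then 0 else x + 1) - P\<bar>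
       = (if x < P then P - \<bar>x - P\<bar> + 1 else P - \<bar>x - P\<bar> - 1)"
  using assms by auto

lemma d_Suc:
  "d (Suc j) (Suc n) = (if (n div 2 ^ j) mod 2 = 0 then d (Suc j) n + 1 else d (Suc j) n - 1)"
proof -
  define r where "r = n mod 2 ^ Suc j"
  have "r = 2 ^ j * ((n div 2 ^ j) mod 2) + n mod 2 ^ j"
    using mod_mult2_eq[of n "2 ^ j" 2] unfolding r_def by (simp add: mult.commute)
  then have bit: "(n div 2 ^ j) mod 2 = 0 \<longleftrightarrow> int r < 2 ^ j"
    by (cases "(n div 2 ^ j) mod 2 = 0")
      (auto simp: of_nat_less_iff[symmetric] simp del: of_nat_less_iff)
  have "int r < 2 * 2 ^ j"
    using of_nat_less_iff[of r "2 * 2 ^ j", where 'a = int] unfolding r_def by simp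
  moreover have "int (Suc n mod 2 ^ Suc j) = (if int r + 1 = 2 * 2 ^ j then 0 else int r + 1)"
    using of_nat_eq_iff[of "Suc r" "2 * 2 ^ j", where 'a = int] unfolding r_def
    by (simp add: mod_Suc add.commute)
  ultimately show ?thesis
    using tent_step[of "int r" "2 ^ j"] unfolding d_def r_def[symmetric] bit by simp
qed

lemma side_count_Suc:
  "side_count (Suc n) k i b = side_count n k i b + (if beta k n i = b then 1 else 0)"
proof -
  have "{m. m < Suc n \<and> beta k m i = b}
      = {m. m < n \<and> beta k m i = b} \<union> (if beta k n i = b then {n} else {})"
    by (auto simp: less_Suc_eq)
  then show ?thesis unfolding side_count_def by (simp add: card_insert_if)
qed

lemma beta_eq_0_or_1: "beta k m i = 0 \<or> beta k m i = 1"
  unfolding beta_def by auto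

lemma side_count_sum: "side_count n k i 0 + side_count n k i 1 = n"
proof (induction n)
  case (Suc n)
  then show ?case using beta_eq_0_or_1[of k n i] by (auto simp: side_count_Suc)
qed (simp add: side_count_def)

lemma side_count_diff: "int (side_count n k i 0) - int (side_count n k i 1) = d (Suc (k - i)) n"
proof (induction n)
  case (Suc n)
  then show ?case using beta_eq_0_or_1[of k n i] by (auto simp: side_count_Suc d_Suc beta_def)
qed (simp add: side_count_def d_def)

lemma d_values_eq:
  assumes "n \<le> 2 ^ k"
  shows "{d i n | i. i \<ge> 1} = (\<lambda>i. d i n) ` {1..Suc k}"
proof -
  have big: "d i n = int n" if "i \<ge> Suc k" for i
  proof -
    obtain j where "i = Suc j" "k \<le> j" using \<open>i \<ge> Suc k\<close> by (cases i) auto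
    then show ?thesis
      using order_trans[OF assms power_increasing[of k j "2::nat"]] by (simp add: d_eq_self)
  qed
  show ?thesis
  proof (intro set_eqI iffI)
    fix x assume "x \<in> {d i n | i. i \<ge> 1}"
    then obtain i where "i \<ge> 1" "x = d i n" by blast
    then show "x \<in> (\<lambda>i. d i n) ` {1..Suc k}"
      using big[of i] big[of "Suc k"] by (cases "i \<le> Suc k") force+
  qed auto
qed

lemma c_eq_card:
  assumes "n \<ge> 1"
  shows "c n = card ((\<lambda>i. d i n) ` {1..Suc (clog2 n)})"
  unfolding c_def d_values_eq[OF le_two_pow_clog2[OF assms]] ..

lemma c_1: "c 1 = 1"
  using c_eq_card[of 1] clog2_1 by simp

lemma c_2: "c 2 = 2"
  using c_eq_card[of 2] by (simp add: clog2_2 d_def atLeastAtMostSuc_conv)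

lemma reflect_atLeastAtMost: "(\<lambda>i. Suc (k - i)) ` {1..k} = {1..k}"
proof (rule antisym)
  show "{1..k} \<subseteq> (\<lambda>i. Suc (k - i)) ` {1..k}"
  proof
    fix j assume "j \<in> {1..k}"
    then show "j \<in> (\<lambda>i. Suc (k - i)) ` {1..k}" by (intro image_eqI[of _ _ "Suc k - j"]) auto
  qed
qed auto

lemma HCBP_set_eq:
  assumes "n \<ge> 2"
  shows "{(n0, n1). is_HCBP n n0 n1}
       = {p \<in> (\<lambda>i. (side_count n (clog2 n) i 0, side_count n (clog2 n) i 1)) ` {1..clog2 n}. snd p \<noteq> 0}"
proof -
  define K where "K = clog2 n"
  have le: "side_count n K i 1 \<le> side_count n K i 0" for i
    using side_count_diff[of n K i] d_nonneg[of "K - i" n] by linarith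
  have "is_HCBP n n0 n1 \<longleftrightarrow> n1 \<noteq> 0 \<and>
      (\<exists>i \<in> {1..K}. side_count n K i 0 = n0 \<and> side_count n K i 1 = n1)" (is "_ \<longleftrightarrow> ?split")
    for n0 n1
  proof
    assume "is_HCBP n n0 n1"
    then obtain i where "i \<in> {1..K}" "n1 \<ge> 1" "n1 \<le> n0"
      and "(side_count n K i 0 = n0 \<and> side_count n K i 1 = n1) \<or>
           (side_count n K i 0 = n1 \<and> side_count n K i 1 = n0)"
      unfolding is_HCBP_def K_def by blast
    with le[of i] show ?split by auto
  next
    assume ?split
    then obtain i where "i \<in> {1..K}" "n1 \<noteq> 0"
      "side_count n K i 0 = n0" "side_count n K i 1 = n1" by blast
    with le[of i] side_count_sum[of n K i] assms show "is_HCBP n n0 n1"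
      unfolding is_HCBP_def K_def by auto
  qed
  then show ?thesis unfolding K_def[symmetric] by auto
qed

lemma h_eq_card:
  assumes "n \<ge> 2"
  shows "h n = card ((\<lambda>i. d i n) ` {1..clog2 n} - {int n})"
proof -
  define K where "K = clog2 n"
  define sides where "sides i = (side_count n K i 0, side_count n K i 1)" for i
  define gap :: "nat \<times> nat \<Rightarrow> int" where "gap p = int (fst p) - int (snd p)" for p
  let ?A = "sides ` {1..K}"
  have sum: "fst p + snd p = n" if "p \<in> ?A" for p
    using that side_count_sum unfolding sides_def by auto
  have inj: "inj_on gap ?A"
  proof (rule inj_onI)
    fix p q assume "p \<in> ?A" "q \<in> ?A" "gap p = gap q"
    with sum[of p] sum[of q] show "p = q" unfolding gap_def by (simp add: prod_eq_iff)
  qed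
  have gap_A: "gap ` ?A = (\<lambda>i. d i n) ` {1..K}"
  proof -
    have "gap ` ?A = (\<lambda>i. d (Suc (K - i)) n) ` {1..K}"
      unfolding image_image gap_def sides_def fst_conv snd_conv side_count_diff ..
    also have "\<dots> = (\<lambda>i. d i n) ` ((\<lambda>i. Suc (K - i)) ` {1..K})"
      by (simp add: image_image)
    finally show ?thesis unfolding reflect_atLeastAtMost .
  qed
  have "{p \<in> ?A. snd p \<noteq> 0} = {p \<in> ?A. gap p \<noteq> int n}"
  proof (rule Collect_cong)
    fix p show "p \<in> ?A \<and> snd p \<noteq> 0 \<longleftrightarrow> p \<in> ?A \<and> gap p \<noteq> int n"
      using sum[of p] unfolding gap_def by auto
  qed
  then have "h n = card {p \<in> ?A. gap p \<noteq> int n}"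
    using assms HCBP_set_eq unfolding h_def sides_def K_def by simp
  also have "\<dots> = card (gap ` {p \<in> ?A. gap p \<noteq> int n})"
    using inj by (simp add: card_image inj_on_subset)
  also have "gap ` {p \<in> ?A. gap p \<noteq> int n} = gap ` ?A - {int n}"
    by auto
  finally show ?thesis unfolding gap_A by (simp only: K_def)
qed

lemma c_eq_Suc_h:
  assumes "n \<ge> 2"
  shows "c n = Suc (h n)"
proof -
  have "n \<le> 2 ^ clog2 n" using assms by (intro le_two_pow_clog2) simp
  then have "(\<lambda>i. d i n) ` {1..Suc (clog2 n)} = insert (int n) ((\<lambda>i. d i n) ` {1..clog2 n})"
    by (simp add: d_eq_self atLeastAtMostSuc_conv)
  then show ?thesis
    using assms by (simp add: c_eq_card h_eq_card card.insert_remove)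
qed

lemma d_mod_8:
  assumes "i \<le> 3"
  shows "d i (n mod 8) = d i n"
proof -
  have "(2::nat) ^ i dvd 2 ^ 3" using assms by (rule le_imp_power_dvd)
  then show ?thesis unfolding d_def by (simp add: mod_mod_cancel)
qed

text \<open>\<open>d\<^sub>1, d\<^sub>2, d\<^sub>3\<close> only depend on \<open>n mod 8\<close>, so this is a finite check.\<close>
lemma d_1_2_3_collide: "d 1 n = d 2 n \<or> d 2 n = d 3 n"
proof -
  have "n mod 8 \<in> {0, 1, 2, 3, 4, 5, 6, 7}" by auto
  then have "d 1 (n mod 8) = d 2 (n mod 8) \<or> d 2 (n mod 8) = d 3 (n mod 8)"
    by (auto simp: d_def)
  then show ?thesis by (simp add: d_mod_8)
qed

lemma c_le_clog2:
  assumes "n \<ge> 3"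
  shows "c n \<le> clog2 n"
proof -
  define K where "K = clog2 n"
  have "n \<le> 2 ^ K" using assms le_two_pow_clog2[of n] unfolding K_def by simp
  then have "(2::nat) ^ 1 < 2 ^ K" using assms by simp
  then have K: "K \<ge> 2" using power_less_imp_less_exp[of "2::nat" 1 K] by simp
  have "\<not> inj_on (\<lambda>i. d i n) {1..Suc K}"
  proof
    assume inj: "inj_on (\<lambda>i. d i n) {1..Suc K}"
    have "(1::nat) = 2 \<or> (2::nat) = 3"
      using d_1_2_3_collide[of n] K inj_onD[OF inj] by force
    then show False by simp
  qed
  then have "card ((\<lambda>i. d i n) ` {1..Suc K}) < card {1..Suc K}"
    by (metis card_image_le finite_atLeastAtMost inj_on_iff_eq_card order_le_neq_trans)
  then show ?thesis using assms c_eq_card[of n] unfolding K_def by simp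
qed

definition repunit4 :: "nat \<Rightarrow> nat" where
  "repunit4 t = (\<Sum>j<t. 4 ^ j)"

lemma repunit4_0 [simp]: "repunit4 0 = 0"
  unfolding repunit4_def by simp

lemma repunit4_Suc: "repunit4 (Suc t) = repunit4 t + 4 ^ t"
  unfolding repunit4_def by simp

lemma three_mul_repunit4: "3 * repunit4 t + 1 = 4 ^ t"
  by (induction t) (simp_all add: repunit4_Suc)

lemma repunit4_add: "repunit4 (a + b) = repunit4 a + 4 ^ a * repunit4 b"
  by (induction b) (simp_all add: repunit4_Suc algebra_simps power_add)

lemma strict_mono_repunit4: "strict_mono repunit4"
  unfolding strict_mono_Suc_iff by (simp add: repunit4_Suc)

lemma five_le_repunit4:
  assumes "t \<ge> 2"
  shows "5 \<le> repunit4 t"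
proof -
  have "repunit4 2 = 5" by (simp add: repunit4_Suc numeral_2_eq_2)
  then show ?thesis using strict_mono_less_eq[OF strict_mono_repunit4] assms by metis
qed

lemma repunit4_mod_two_pow:
  assumes "i \<le> 2 * t"
  shows "repunit4 t mod 2 ^ i = repunit4 ((i + 1) div 2)"
proof -
  define u where "u = (i + 1) div 2"
  have "i \<le> 2 * u" "2 * u \<le> Suc i" "u \<le> t" unfolding u_def using assms by auto
  have "(4::nat) ^ u = 2 ^ (2 * u)" by (simp add: power_mult)
  then obtain q where q: "(4::nat) ^ u = 2 ^ i * q"
    using le_imp_power_dvd[OF \<open>i \<le> 2 * u\<close>, of "2::nat"] by (auto elim: dvdE)
  have "3 * repunit4 u + 1 \<le> 2 * 2 ^ i"
    unfolding three_mul_repunit4 \<open>4 ^ u = 2 ^ (2 * u)\<close>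
    using power_increasing[OF \<open>2 * u \<le> Suc i\<close>, of "2::nat"] by simp
  then have small: "repunit4 u < 2 ^ i" by linarith
  have "repunit4 t = repunit4 u + 2 ^ i * (q * repunit4 (t - u))"
    using repunit4_add[of u "t - u"] \<open>u \<le> t\<close> q by simp
  then show ?thesis unfolding u_def[symmetric] using small by simp
qed

lemma three_mul_d_repunit4:
  assumes "1 \<le> i" "i \<le> 2 * t"
  shows "3 * d i (repunit4 t) = 2 ^ i - (-1) ^ i"
proof -
  obtain j where i: "i = Suc j" using assms(1) by (cases i) auto
  define r where "r = repunit4 ((i + 1) div 2)"
  define x where "x = int r"
  define P :: int where "P = 2 ^ j"
  have "3 * r + 1 = 4 ^ ((i + 1) div 2)" unfolding r_def by (rule three_mul_repunit4)
  also have "\<dots> = 2 ^ (2 * ((i + 1) div 2))" by (simp add: power_mult)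
  also have "\<dots> = (if even i then 2 * 2 ^ j else 4 * 2 ^ j)"
    unfolding i by (auto elim!: evenE oddE simp: power_add)
  finally have "3 * x + 1 = (if even i then 2 * P else 4 * P)"
    unfolding x_def P_def
    by (metis (mono_tags) of_nat_1 of_nat_add of_nat_mult of_nat_numeral of_nat_power)
  moreover have "d i (repunit4 t) = P - \<bar>x - P\<bar>"
    using repunit4_mod_two_pow[OF assms(2)] unfolding d_def r_def x_def P_def i by simp
  moreover have "2 ^ i = 2 * P" "P > 0" unfolding i P_def by simp_all
  ultimately show ?thesis by (cases "even i") (auto simp: abs_if)
qed

lemma d_repunit4_strict_mono_on: "strict_mono_on {2..2 * t} (\<lambda>i. d i (repunit4 t))"
proof -
  have step: "d i (repunit4 t) < d (Suc i) (repunit4 t)" if "i \<in> {2..<2 * t}" for i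
  proof -
    have "(4::int) \<le> 2 ^ i" using that power_increasing[of 2 i "2::int"] by simp
    moreover have "(-1::int) ^ i = 1 \<or> (-1::int) ^ i = -1" by (cases "even i") simp_all
    ultimately have "3 * d i (repunit4 t) < 3 * d (Suc i) (repunit4 t)"
      using that by (auto simp: three_mul_d_repunit4)
    then show ?thesis by simp
  qed
  show ?thesis
    by (rule strict_mono_onI, rule lift_Suc_mono_less_ivl[where N = "{2..<2 * t}"])
      (use step in auto)
qed

lemma clog2_repunit4:
  assumes "t \<ge> 2"
  shows "clog2 (repunit4 t) = 2 * t - 1"
proof -
  obtain s where t: "t = Suc (Suc s)" using assms by (metis add_2_eq_Suc le_Suc_ex)
  have "2 ^ (2 * Suc s) < repunit4 t"
    using repunit4_Suc[of "Suc s"] repunit4_Suc[of s] three_mul_repunit4[of "Suc s"] unfolding t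
    by (simp add: power_mult)
  moreover have "repunit4 t \<le> 2 ^ Suc (2 * Suc s)"
    using three_mul_repunit4[of t] unfolding t by (simp add: power_mult)
  ultimately show ?thesis unfolding t by (subst clog2_eqI) simp_all
qed

lemma c_repunit4:
  assumes "t \<ge> 2"
  shows "c (repunit4 t) = clog2 (repunit4 t)"
proof (rule antisym)
  have "5 \<le> repunit4 t" using assms by (rule five_le_repunit4)
  then show "c (repunit4 t) \<le> clog2 (repunit4 t)" by (intro c_le_clog2) simp
  have "clog2 (repunit4 t) = card ((\<lambda>i. d i (repunit4 t)) ` {2..2 * t})"
    using strict_mono_on_imp_inj_on[OF d_repunit4_strict_mono_on]
    by (simp add: card_image clog2_repunit4 assms)
  also have "\<dots> \<le> card ((\<lambda>i. d i (repunit4 t)) ` {1..Suc (clog2 (repunit4 t))})"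
    using assms by (intro card_mono image_mono) (auto simp: clog2_repunit4)
  also have "\<dots> = c (repunit4 t)"
    using \<open>5 \<le> repunit4 t\<close> by (simp add: c_eq_card)
  finally show "clog2 (repunit4 t) \<le> c (repunit4 t)" .
qed

theorem mainTheorem12:
  shows "(\<forall>n::nat. n \<in> {1, 2} \<longrightarrow> c n = clog2 n + 1 \<and> h n = clog2 n)
       \<and> (\<forall>n::nat. n \<ge> 3 \<longrightarrow> c n \<le> clog2 n \<and> h n \<le> clog2 n - 1)
       \<and> infinite {n::nat. n \<ge> 3 \<and> c n = clog2 n \<and> h n = clog2 n - 1}"
proof (intro conjI)
  have "c 1 = clog2 1 + 1 \<and> h 1 = clog2 1"
    using c_1 clog2_1 by (simp add: h_def)
  moreover have "c 2 = clog2 2 + 1 \<and> h 2 = clog2 2"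
    using c_2 clog2_2 c_eq_Suc_h[of 2] by simp
  ultimately show "\<forall>n::nat. n \<in> {1, 2} \<longrightarrow> c n = clog2 n + 1 \<and> h n = clog2 n"
    by blast
  show "\<forall>n::nat. n \<ge> 3 \<longrightarrow> c n \<le> clog2 n \<and> h n \<le> clog2 n - 1"
    using c_le_clog2 c_eq_Suc_h by fastforce
  have "repunit4 ` {2..} \<subseteq> {n. n \<ge> 3 \<and> c n = clog2 n \<and> h n = clog2 n - 1}"
    using five_le_repunit4 c_repunit4 c_eq_Suc_h by fastforce
  moreover have "infinite (repunit4 ` {2..})"
    using strict_mono_repunit4 by (simp add: finite_image_iff strict_mono_imp_inj_on infinite_Ici)
  ultimately show "infinite {n::nat. n \<ge> 3 \<and> c n = clog2 n \<and> h n = clog2 n - 1}"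
    using infinite_super by blast
qed

end
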